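(* If $\sigma$ is a subgame perfect equilibrium in $(\mathcal{X},x_0)$, then $\Lambda^*(v)\neq\emptyset$ for every vertex $v$ of $X$ reachable from $x_0$, and $\langle\sigma\rangle_{x_0}\in\Lambda^*(x_0)$.
   Context: Games: an arena $G=(\Pi,V,(V_i)_{i\in\Pi},E)$ has finite player set $\Pi$, finite vertex set $V$ ($|V|\ge2$, $|\Pi|\le|V|$), partition $(V_i)$ and edges $E$ with every vertex having a successor. A quantitative reachability game has targets $F_i\subseteq V$ and $\mathrm{Cost}_i(\rho)=$ least $k$ with $\rho_k\in F_i$ (or $+\infty$). Strategies map histories ending in $V_i$ to successors; a profile $\sigma$ has outcome $\langle\sigma\rangle_{v_0}$. $\sigma$ is a Nash equilibrium if no player can strictly decrease his cost of the outcome by unilaterally changing his strategy; it is a subgame perfect equilibrium if for every history $hv$ from the initial vertex, $\sigma_{|h}$ ($\sigma_{i|h}(h')=\sigma_i(hh')$) is a Nash equilibrium in the game from $v$ with costs $\rho\mapsto\mathrm{Cost}_i(h\rho)$. Extended game of $(\mathcal{G},v_0)$: $\mathcal{X}$ is the reachability game on arena $X$ with $V^X=V\times2^\Pi$, $((v,I),(v',I'))\in E^X$ iff $(v,v')\in E$ and $I'=I\cup\{i:v'\in F_i\}$, $(v,I)\in V^X_i$ iff $v\in V_i$, targets $F^X_i=\{(v,I):i\in I\}$; $x_0=(v_0,\{i:v_0\in F_i\})$. $I(u)$ is the second component of $u$. $\mathcal{I}$ is the set of $I$ with some $(v,I)$ reachable from $x_0$, $N=|\mathcal{I}|$, and $J_1<\dots<J_N$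 a fixed total order of $\mathcal{I}$ extending $I<I'$ iff $I\ne I'$ and some $(v',I')$ is reachable from some $(v,I)$. $V^{\ge J_n}=\{(v,J_m):v\in V,m\ge n\}$. Labelings: for $\lambda:V^X\to\mathbb{N}\cup\{+\infty\}$, a play $\rho$ of $X$ is $\lambda$-consistent if $\mathrm{Cost}_i(\rho_{\ge n})\le\lambda(\rho_n)$ for all $n$ and $i$ with $\rho_n\in V^X_i$. $\lambda^0(u)=0$ if $u\in V^X_i$ and $i\in I(u)$, else $+\infty$. The update of $\lambda^k$ w.r.t. $V^{\ge J_n}$ keeps values outside $V^{\ge J_n}$ and for $u\in V^{\ge J_n}\cap V^X_i$ sets $\lambda^{k+1}(u)=0$ if $i\in I(u)$, otherwise $1+\min_{(u,u')\in E^X}\sup\{\mathrm{Cost}_i(\rho):\rho\in\Lambda^k(u')\}$, $\Lambda^k(u')$ being the $\lambda^k$-consistent plays from $u'$ and $1+(+\infty)=+\infty$. The sequence is generated by $n_0=N$, $\lambda^{k+1}=$ update of $\lambda^k$ w.r.t. $V^{\ge J_{n_k}}$, $n_{k+1}=n_k-1$ if $\lambda^{k+1}=\lambda^k$ and $n_k>1$, else $n_{k+1}=n_k$. It eventually becomes constant, equal to $\lambda^*$; $\Lambda^*(v)$ is the set of $\lambda^*$-consistent plays from $v$. *)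

theory Defs
  imports Main "HOL-Library.Extended_Nat"
begin

text \<open>An arena is given by a vertex set V, an edge relation E, an owner map own
(vertex v belongs to V_i iff own v = i) and a player set P.
Plays are infinite sequences (nat => 'a), histories are non-empty finite paths (lists).\<close>

definition is_play :: "'a set \<Rightarrow> ('a \<times> 'a) set \<Rightarrow> (nat \<Rightarrow> 'a) \<Rightarrow> bool" where
  "is_play V E \<rho> \<longleftrightarrow> (\<forall>n. \<rho> n \<in> V \<and> (\<rho> n, \<rho> (Suc n)) \<in> E)"

definition is_history :: "'a set \<Rightarrow> ('a \<times> 'a) set \<Rightarrow> 'a list \<Rightarrow> bool" where
  "is_history V E h \<longleftrightarrow> h \<noteq> [] \<and> set h \<subseteq> V \<and> (\<forall>k. Suc k < length h \<longrightarrow> (h ! k, h ! Suc k) \<in> E)"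

definition cost :: "'a set \<Rightarrow> (nat \<Rightarrow> 'a) \<Rightarrow> enat" where
  "cost T \<rho> = (if \<exists>k. \<rho> k \<in> T then enat (LEAST k. \<rho> k \<in> T) else \<infinity>)"

definition prepend :: "'a list \<Rightarrow> (nat \<Rightarrow> 'a) \<Rightarrow> nat \<Rightarrow> 'a" where
  "prepend h \<rho> n = (if n < length h then h ! n else \<rho> (n - length h))"

definition is_strategy :: "'a set \<Rightarrow> ('a \<times> 'a) set \<Rightarrow> ('a \<Rightarrow> 'p) \<Rightarrow> 'p \<Rightarrow> ('a list \<Rightarrow> 'a) \<Rightarrow> bool" where
  "is_strategy V E own i s \<longleftrightarrow>
     (\<forall>h. is_history V E h \<and> own (last h) = i \<longrightarrow> (last h, s h) \<in> E)"

fun out_prefix :: "('a \<Rightarrow> 'p) \<Rightarrow> ('p \<Rightarrow> 'a list \<Rightarrow> 'a) \<Rightarrow> 'a \<Rightarrow> nat \<Rightarrow> 'a list" where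
  "out_prefix own \<tau> v 0 = [v]"
| "out_prefix own \<tau> v (Suc n) =
     (let h = out_prefix own \<tau> v n in h @ [\<tau> (own (last h)) h])"

definition outcome :: "('a \<Rightarrow> 'p) \<Rightarrow> ('p \<Rightarrow> 'a list \<Rightarrow> 'a) \<Rightarrow> 'a \<Rightarrow> nat \<Rightarrow> 'a" where
  "outcome own \<tau> v n = last (out_prefix own \<tau> v n)"

definition is_NE :: "'a set \<Rightarrow> ('a \<times> 'a) set \<Rightarrow> ('a \<Rightarrow> 'p) \<Rightarrow> 'p set
    \<Rightarrow> ('p \<Rightarrow> (nat \<Rightarrow> 'a) \<Rightarrow> enat) \<Rightarrow> ('p \<Rightarrow> 'a list \<Rightarrow> 'a) \<Rightarrow> 'a \<Rightarrow> bool" where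
  "is_NE V E own P c \<tau> v \<longleftrightarrow>
     (\<forall>i\<in>P. \<forall>s. is_strategy V E own i s \<longrightarrow>
        c i (outcome own \<tau> v) \<le> c i (outcome own (\<tau>(i := s)) v))"

text \<open>Subgame perfect equilibrium in the reachability game with targets T from x0:
  for every history h v from x0, sigma restricted to h is a NE from v with costs
  rho |-> Cost_i(h rho).\<close>
definition is_SPE :: "'a set \<Rightarrow> ('a \<times> 'a) set \<Rightarrow> ('a \<Rightarrow> 'p) \<Rightarrow> 'p set \<Rightarrow> ('p \<Rightarrow> 'a set)
    \<Rightarrow> ('p \<Rightarrow> 'a list \<Rightarrow> 'a) \<Rightarrow> 'a \<Rightarrow> bool" where
  "is_SPE V E own P T \<sigma> x0 \<longleftrightarrow>
     (\<forall>i\<in>P. is_strategy V E own i (\<sigma> i)) \<and>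
     (\<forall>h v. is_history V E (h @ [v]) \<and> hd (h @ [v]) = x0 \<longrightarrow>
        is_NE V E own P (\<lambda>i \<rho>. cost (T i) (prepend h \<rho>)) (\<lambda>i h'. \<sigma> i (h @ h')) v)"

definition VX :: "'v set \<Rightarrow> 'p set \<Rightarrow> ('v \<times> 'p set) set" where
  "VX V P = V \<times> Pow P"

definition EdgesX :: "'v set \<Rightarrow> ('v \<times> 'v) set \<Rightarrow> 'p set \<Rightarrow> ('p \<Rightarrow> 'v set)
    \<Rightarrow> (('v \<times> 'p set) \<times> ('v \<times> 'p set)) set" where
  "EdgesX V E P F = {(u, u'). fst u \<in> V \<and> snd u \<subseteq> P \<and> (fst u, fst u') \<in> E \<and>
                 snd u' = snd u \<union> {i \<in> P. fst u' \<in> F i}}"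

definition ownX :: "('v \<Rightarrow> 'p) \<Rightarrow> 'v \<times> 'p set \<Rightarrow> 'p" where
  "ownX own u = own (fst u)"

definition FX :: "'v set \<Rightarrow> 'p set \<Rightarrow> 'p \<Rightarrow> ('v \<times> 'p set) set" where
  "FX V P i = {u \<in> VX V P. i \<in> snd u}"

definition x0X :: "'p set \<Rightarrow> ('p \<Rightarrow> 'v set) \<Rightarrow> 'v \<Rightarrow> 'v \<times> 'p set" where
  "x0X P F v0 = (v0, {i \<in> P. v0 \<in> F i})"

definition calI :: "'v set \<Rightarrow> ('v \<times> 'v) set \<Rightarrow> 'p set \<Rightarrow> ('p \<Rightarrow> 'v set) \<Rightarrow> 'v \<Rightarrow> 'p set set" where
  "calI V E P F v0 = {I. \<exists>v. (x0X P F v0, (v, I)) \<in> (EdgesX V E P F)\<^sup>*}"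

text \<open>J enumerates \<I> as J 1 < ... < J N, a total order extending reachability between
  distinct second components.\<close>
definition is_ext_order :: "'v set \<Rightarrow> ('v \<times> 'v) set \<Rightarrow> 'p set \<Rightarrow> ('p \<Rightarrow> 'v set) \<Rightarrow> 'v
    \<Rightarrow> (nat \<Rightarrow> 'p set) \<Rightarrow> bool" where
  "is_ext_order V E P F v0 J \<longleftrightarrow>
     bij_betw J {1..card (calI V E P F v0)} (calI V E P F v0) \<and>
     (\<forall>a\<in>{1..card (calI V E P F v0)}. \<forall>b\<in>{1..card (calI V E P F v0)}.
        J a \<noteq> J b \<and> (\<exists>v v'. v \<in> V \<and> v' \<in> V \<and> ((v, J a), (v', J b)) \<in> (EdgesX V E P F)\<^sup>*)
        \<longrightarrow> a < b)"

definition Vge :: "'v set \<Rightarrow> (nat \<Rightarrow> 'p set) \<Rightarrow> nat \<Rightarrow> nat \<Rightarrow> ('v \<times> 'p set) set" where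
  "Vge V J N n = {(v, J m) | v m. v \<in> V \<and> n \<le> m \<and> m \<le> N}"

definition consistent :: "'v set \<Rightarrow> ('v \<times> 'v) set \<Rightarrow> ('v \<Rightarrow> 'p) \<Rightarrow> 'p set \<Rightarrow> ('p \<Rightarrow> 'v set)
    \<Rightarrow> ('v \<times> 'p set \<Rightarrow> enat) \<Rightarrow> (nat \<Rightarrow> 'v \<times> 'p set) \<Rightarrow> bool" where
  "consistent V E own P F lam \<rho> \<longleftrightarrow>
     is_play (VX V P) (EdgesX V E P F) \<rho> \<and>
     (\<forall>n. cost (FX V P (ownX own (\<rho> n))) (\<lambda>k. \<rho> (n + k)) \<le> lam (\<rho> n))"

definition Lam :: "'v set \<Rightarrow> ('v \<times> 'v) set \<Rightarrow> ('v \<Rightarrow> 'p) \<Rightarrow> 'p set \<Rightarrow> ('p \<Rightarrow> 'v set)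
    \<Rightarrow> ('v \<times> 'p set \<Rightarrow> enat) \<Rightarrow> 'v \<times> 'p set \<Rightarrow> (nat \<Rightarrow> 'v \<times> 'p set) set" where
  "Lam V E own P F lam u = {\<rho>. consistent V E own P F lam \<rho> \<and> \<rho> 0 = u}"

definition lambda0 :: "('v \<Rightarrow> 'p) \<Rightarrow> 'v \<times> 'p set \<Rightarrow> enat" where
  "lambda0 own u = (if ownX own u \<in> snd u then 0 else \<infinity>)"

definition update_lab :: "'v set \<Rightarrow> ('v \<times> 'v) set \<Rightarrow> ('v \<Rightarrow> 'p) \<Rightarrow> 'p set \<Rightarrow> ('p \<Rightarrow> 'v set)
    \<Rightarrow> (nat \<Rightarrow> 'p set) \<Rightarrow> nat \<Rightarrow> ('v \<times> 'p set \<Rightarrow> enat) \<Rightarrow> nat \<Rightarrow> 'v \<times> 'p set \<Rightarrow> enat" where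
  "update_lab V E own P F J N lam n u =
     (if u \<in> Vge V J N n then
        (if ownX own u \<in> snd u then 0
         else 1 + (INF u'\<in>{u'. (u, u') \<in> EdgesX V E P F}.
                     SUP \<rho>\<in>Lam V E own P F lam u'. cost (FX V P (ownX own u)) \<rho>))
      else lam u)"

fun lab_seq :: "'v set \<Rightarrow> ('v \<times> 'v) set \<Rightarrow> ('v \<Rightarrow> 'p) \<Rightarrow> 'p set \<Rightarrow> ('p \<Rightarrow> 'v set)
    \<Rightarrow> (nat \<Rightarrow> 'p set) \<Rightarrow> nat \<Rightarrow> nat \<Rightarrow> ('v \<times> 'p set \<Rightarrow> enat) \<times> nat" where
  "lab_seq V E own P F J N 0 = (lambda0 own, N)"
| "lab_seq V E own P F J N (Suc k) =
     (let (lam, n) = lab_seq V E own P F J N k;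
          lam' = update_lab V E own P F J N lam n
      in (lam', if lam' = lam \<and> n > 1 then n - 1 else n))"

definition lambda_star :: "'v set \<Rightarrow> ('v \<times> 'v) set \<Rightarrow> ('v \<Rightarrow> 'p) \<Rightarrow> 'p set \<Rightarrow> ('p \<Rightarrow> 'v set)
    \<Rightarrow> (nat \<Rightarrow> 'p set) \<Rightarrow> nat \<Rightarrow> 'v \<times> 'p set \<Rightarrow> enat" where
  "lambda_star V E own P F J N =
     (THE l. \<exists>K. \<forall>k\<ge>K. fst (lab_seq V E own P F J N k) = l)"

definition Lam_star :: "'v set \<Rightarrow> ('v \<times> 'v) set \<Rightarrow> ('v \<Rightarrow> 'p) \<Rightarrow> 'p set \<Rightarrow> ('p \<Rightarrow> 'v set)
    \<Rightarrow> (nat \<Rightarrow> 'p set) \<Rightarrow> nat \<Rightarrow> 'v \<times> 'p set \<Rightarrow> (nat \<Rightarrow> 'v \<times> 'p set) set" where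
  "Lam_star V E own P F J N u = Lam V E own P F (lambda_star V E own P F J N) u"

end

theory Submission
  imports Defs
begin

(*
  Every play that an SPE \<sigma> induces after a history h u is \<lambda>^k-consistent for every k, by
  induction on k. Consistency reduces to a bound on the owner's cost at the first vertex, because
  every suffix of such a play is again the play of \<sigma> after a longer history. The bound for an
  updated label is the one-shot deviation argument: if the owner i of u has not reached his target
  yet, moving to the successor u' realising the minimum in the update and then following \<sigma> costs
  1 plus the cost of a \<lambda>^k-consistent play from u', which is at most the new label; \<sigma> being a
  Nash equilibrium in the subgame, its own play costs i no more. Labels only decrease and change
  only on the finite set V \<times> {J_1, ..., J_N}, so the sequence stabilises and \<lambda>^* is one of
  the \<lambda>^k.
*)

section \<open>Histories and outcomes\<close>

abbreviation profile_after :: "('p \<Rightarrow> 'a list \<Rightarrow> 'a) \<Rightarrow> 'a list \<Rightarrow> 'p \<Rightarrow> 'a list \<Rightarrow> 'a" where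
  "profile_after \<sigma> h \<equiv> \<lambda>i h'. \<sigma> i (h @ h')"

lemma is_history_iff_successively:
  "is_history V E h \<longleftrightarrow> h \<noteq> [] \<and> set h \<subseteq> V \<and> successively (\<lambda>x y. (x, y) \<in> E) h"
  unfolding is_history_def successively_conv_nth by blast

lemma is_history_snoc:
  "is_history V E h \<Longrightarrow> (last h, v) \<in> E \<Longrightarrow> v \<in> V \<Longrightarrow> is_history V E (h @ [v])"
  by (auto simp: is_history_iff_successively successively_append_iff)

lemma is_history_append:
  "is_history V E (h @ [u]) \<Longrightarrow> is_history V E h' \<Longrightarrow> hd h' = u \<Longrightarrow> is_history V E (h @ h')"
  by (cases h') (auto simp: is_history_iff_successively successively_append_iff)

lemma rtrancl_imp_history:
  assumes "(x0, u) \<in> E\<^sup>*" "x0 \<in> V" "E \<subseteq> V \<times> V"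
  shows "\<exists>h. is_history V E (h @ [u]) \<and> hd (h @ [u]) = x0"
  using assms(1)
proof (induction rule: rtrancl_induct)
  case base
  show ?case using assms(2) by (intro exI[of _ "[]"]) (simp add: is_history_def)
next
  case (step y z)
  then obtain h where h: "is_history V E (h @ [y])" "hd (h @ [y]) = x0" by blast
  have "is_history V E ((h @ [y]) @ [z])"
    using is_history_snoc[OF h(1)] step(2) assms(3) by auto
  moreover have "hd ((h @ [y]) @ [z]) = x0" using h(2) by (cases h) auto
  ultimately show ?case by blast
qed

lemma length_out_prefix [simp]: "length (out_prefix own \<tau> v n) = Suc n"
  by (induction n) (auto simp: Let_def)

lemma out_prefix_not_Nil [simp]: "out_prefix own \<tau> v n \<noteq> []"
  by (metis length_out_prefix list.size(3) nat.distinct(1))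

lemma out_prefix_conv_map: "out_prefix own \<tau> v n = map (outcome own \<tau> v) [0..<Suc n]"
proof (induction n)
  case (Suc n)
  have "outcome own \<tau> v (Suc n) = \<tau> (own (last (out_prefix own \<tau> v n))) (out_prefix own \<tau> v n)"
    by (simp add: outcome_def Let_def)
  then show ?case using Suc by (simp add: Let_def)
qed (simp add: outcome_def)

lemma outcome_0 [simp]: "outcome own \<tau> v 0 = v"
  by (simp add: outcome_def)

lemma hd_out_prefix [simp]: "hd (out_prefix own \<tau> v n) = v"
  by (simp add: out_prefix_conv_map hd_map upt_rec)

lemma is_history_out_prefix:
  assumes "v \<in> V" "E \<subseteq> V \<times> V"
    and moves: "\<And>h. is_history V E h \<Longrightarrow> hd h = v \<Longrightarrow> (last h, \<tau> (own (last h)) h) \<in> E"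
  shows "is_history V E (out_prefix own \<tau> v n)"
proof (induction n)
  case 0
  then show ?case using assms(1) by (simp add: is_history_def)
next
  case (Suc n)
  then show ?case using moves[OF Suc] assms(2) by (auto simp: Let_def intro: is_history_snoc)
qed

lemma is_play_outcome:
  assumes "v \<in> V" "E \<subseteq> V \<times> V"
    and "\<And>h. is_history V E h \<Longrightarrow> hd h = v \<Longrightarrow> (last h, \<tau> (own (last h)) h) \<in> E"
  shows "is_play V E (outcome own \<tau> v)"
  unfolding is_play_def
proof
  fix n
  have "is_history V E (map (outcome own \<tau> v) [0..<Suc (Suc n)])"
    using is_history_out_prefix[of v V E \<tau> own "Suc n"] assms by (simp add: out_prefix_conv_map)
  then show "outcome own \<tau> v n \<in> V \<and> (outcome own \<tau> v n, outcome own \<tau> v (Suc n)) \<in> E"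
    by (auto simp: is_history_iff_successively successively_append_iff)
qed

lemma outcome_shift:
  "outcome own \<tau> v (m + n) =
   outcome own (profile_after \<tau> (map (outcome own \<tau> v) [0..<m])) (outcome own \<tau> v m) n"
proof -
  let ?pre = "map (outcome own \<tau> v) [0..<m]"
  have "out_prefix own (profile_after \<tau> ?pre) (outcome own \<tau> v m) n
          = drop m (out_prefix own \<tau> v (m + n))"
  proof (induction n)
    case 0
    then show ?case by (simp add: out_prefix_conv_map)
  next
    case (Suc n)
    have "take m (out_prefix own \<tau> v (m + n)) = ?pre"
      by (simp add: out_prefix_conv_map take_map)
    then have "?pre @ drop m (out_prefix own \<tau> v (m + n)) = out_prefix own \<tau> v (m + n)"
      by (metis append_take_drop_id)
    moreover have "drop m (out_prefix own \<tau> v (m + n)) \<noteq> []" by simp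
    ultimately show ?case using Suc by (simp add: Let_def)
  qed
  then have "outcome own (profile_after \<tau> ?pre) (outcome own \<tau> v m) n
               = last (drop m (out_prefix own \<tau> v (m + n)))"
    by (metis outcome_def)
  also have "\<dots> = outcome own \<tau> v (m + n)"
    by (simp add: outcome_def last_drop)
  finally show ?thesis by (rule sym)
qed

lemma out_prefix_deviation:
  assumes "\<tau>1 (own u) [u] = u'"
    and "\<And>n. \<tau>1 (own (last (out_prefix own \<tau>2 u' n))) (u # out_prefix own \<tau>2 u' n)
              = \<tau>2 (own (last (out_prefix own \<tau>2 u' n))) (out_prefix own \<tau>2 u' n)"
  shows "out_prefix own \<tau>1 u (Suc n) = u # out_prefix own \<tau>2 u' n"
proof (induction n)
  case (Suc n)
  then show ?case using assms(2)[of n] by (simp add: Let_def)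
qed (use assms(1) in simp)

lemma outcome_deviation:
  assumes "\<tau>1 (own u) [u] = u'"
    and "\<And>n. \<tau>1 (own (last (out_prefix own \<tau>2 u' n))) (u # out_prefix own \<tau>2 u' n)
              = \<tau>2 (own (last (out_prefix own \<tau>2 u' n))) (out_prefix own \<tau>2 u' n)"
  shows "outcome own \<tau>1 u = prepend [u] (outcome own \<tau>2 u')"
proof
  fix n
  show "outcome own \<tau>1 u n = prepend [u] (outcome own \<tau>2 u') n"
  proof (cases n)
    case (Suc m)
    then show ?thesis
      using out_prefix_deviation[OF assms, of m] by (simp add: outcome_def prepend_def)
  qed (simp add: prepend_def)
qed

lemma prepend_prepend: "prepend h (prepend h' \<rho>) = prepend (h @ h') \<rho>"
  by (rule ext) (auto simp: prepend_def nth_append)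

lemma cost_eq_0: "\<rho> 0 \<in> T \<Longrightarrow> cost T \<rho> = 0"
  unfolding cost_def by (auto intro!: Least_equality simp: zero_enat_def)

lemma cost_prepend_Cons:
  assumes "x \<notin> T"
  shows "cost T (prepend [x] \<rho>) = eSuc (cost T \<rho>)"
proof (cases "\<exists>k. \<rho> k \<in> T")
  case True
  then obtain k where "prepend [x] \<rho> (Suc k) \<in> T" by (auto simp: prepend_def)
  moreover have "prepend [x] \<rho> 0 \<notin> T" using assms by (simp add: prepend_def)
  ultimately have "(LEAST k. prepend [x] \<rho> k \<in> T) = Suc (LEAST k. \<rho> k \<in> T)"
    by (subst Least_Suc) (auto simp: prepend_def)
  then show ?thesis using True by (auto simp: cost_def prepend_def eSuc_enat)
next
  case False
  then have "\<not> (\<exists>k. prepend [x] \<rho> k \<in> T)"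
    using assms by (auto simp: prepend_def)
  then show ?thesis using False by (simp add: cost_def)
qed

lemma cost_prepend:
  assumes "\<forall>x\<in>set h. x \<notin> T"
  shows "cost T (prepend h \<rho>) = enat (length h) + cost T \<rho>"
  using assms
proof (induction h)
  case Nil
  then show ?case by (simp add: prepend_def zero_enat_def[symmetric])
next
  case (Cons x h)
  have "cost T (prepend (x # h) \<rho>) = cost T (prepend [x] (prepend h \<rho>))"
    by (simp add: prepend_prepend)
  also have "\<dots> = eSuc (cost T (prepend h \<rho>))"
    by (rule cost_prepend_Cons) (use Cons.prems in simp)
  finally show ?case using Cons by (simp add: eSuc_enat[symmetric] iadd_Suc)
qed

section \<open>Subgame perfect equilibria\<close>

lemma strategy_profile_after_move:
  assumes "\<forall>i\<in>P. is_strategy V E own i (\<sigma> i)" "\<forall>v\<in>V. own v \<in> P"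
    and "is_history V E (h @ [u])" "is_history V E h'" "hd h' = u"
  shows "(last h', \<sigma> (own (last h')) (h @ h')) \<in> E"
proof -
  have hh': "is_history V E (h @ h')" and "h' \<noteq> []"
    using is_history_append[OF assms(3-5)] assms(4) by (auto simp: is_history_def)
  moreover have "own (last h') \<in> P"
    using assms(2,4) \<open>h' \<noteq> []\<close> by (auto simp: is_history_def dest!: last_in_set)
  ultimately show ?thesis
    using assms(1) unfolding is_strategy_def by (metis last_appendR)
qed

lemma is_play_outcome_after:
  assumes "\<forall>i\<in>P. is_strategy V E own i (\<sigma> i)" "\<forall>v\<in>V. own v \<in> P" "E \<subseteq> V \<times> V"
    and "is_history V E (h @ [u])"
  shows "is_play V E (outcome own (profile_after \<sigma> h) u)"
  using assms(4) by (intro is_play_outcome assms(3) strategy_profile_after_move[OF assms(1,2,4)])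
    (auto simp: is_history_def)

lemma is_history_outcome_after_prefix:
  assumes "\<forall>i\<in>P. is_strategy V E own i (\<sigma> i)" "\<forall>v\<in>V. own v \<in> P" "E \<subseteq> V \<times> V"
    and "is_history V E (h @ [u])"
  defines "\<rho> \<equiv> outcome own (profile_after \<sigma> h) u"
  shows "is_history V E ((h @ map \<rho> [0..<n]) @ [\<rho> n])"
    and "hd ((h @ map \<rho> [0..<n]) @ [\<rho> n]) = hd (h @ [u])"
proof -
  have "out_prefix own (profile_after \<sigma> h) u n = map \<rho> [0..<n] @ [\<rho> n]"
    by (simp add: out_prefix_conv_map \<rho>_def)
  moreover have "is_history V E (out_prefix own (profile_after \<sigma> h) u n)"
    using assms(4)
    by (intro is_history_out_prefix assms(3) strategy_profile_after_move[OF assms(1,2,4)])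
      (auto simp: is_history_def)
  ultimately show "is_history V E ((h @ map \<rho> [0..<n]) @ [\<rho> n])"
    using is_history_append[OF assms(4)] hd_out_prefix by (metis append_assoc)
  show "hd ((h @ map \<rho> [0..<n]) @ [\<rho> n]) = hd (h @ [u])"
    by (cases h; cases n) (simp_all add: \<rho>_def upt_rec)
qed

lemma SPE_deviation_cost:
  assumes spe: "is_SPE V E own P T \<sigma> x0"
    and hist: "is_history V E (h @ [u])" "hd (h @ [u]) = x0"
    and "own u \<in> P" and "(u, u') \<in> E"
  shows "cost (T (own u)) (prepend h (outcome own (profile_after \<sigma> h) u))
         \<le> cost (T (own u)) (prepend (h @ [u]) (outcome own (profile_after \<sigma> (h @ [u])) u'))"
proof -
  let ?i = "own u"
  \<comment> \<open>The last branch only serves to make s a strategy on histories outside the subgame.\<close>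
  define s where "s h' = (if h' = [u] then u' else if hd h' = u then \<sigma> ?i (h @ h') else \<sigma> ?i h')"
    for h'
  have "is_strategy V E own ?i s"
    unfolding is_strategy_def
  proof (intro allI impI)
    fix h' assume h': "is_history V E h' \<and> own (last h') = ?i"
    have \<sigma>i: "is_strategy V E own ?i (\<sigma> ?i)" using spe \<open>?i \<in> P\<close> by (simp add: is_SPE_def)
    have "h' \<noteq> []" using h' by (simp add: is_history_def)
    consider "h' = [u]" | "h' \<noteq> [u]" "hd h' = u" | "hd h' \<noteq> u" by blast
    then show "(last h', s h') \<in> E"
    proof cases
      case 1
      then show ?thesis using \<open>(u, u') \<in> E\<close> by (simp add: s_def)
    next
      case 2
      then have "is_history V E (h @ h')" using is_history_append[OF hist(1)] h' by blast
      then show ?thesis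
        using 2 \<sigma>i h' \<open>h' \<noteq> []\<close> unfolding is_strategy_def s_def by auto
    next
      case 3
      then show ?thesis using \<sigma>i h' unfolding is_strategy_def s_def by auto
    qed
  qed
  moreover have "is_NE V E own P (\<lambda>i \<rho>. cost (T i) (prepend h \<rho>)) (profile_after \<sigma> h) u"
    using spe hist unfolding is_SPE_def by blast
  ultimately have "cost (T ?i) (prepend h (outcome own (profile_after \<sigma> h) u))
      \<le> cost (T ?i) (prepend h (outcome own ((profile_after \<sigma> h)(?i := s)) u))"
    using \<open>?i \<in> P\<close> unfolding is_NE_def by blast
  also have "outcome own ((profile_after \<sigma> h)(?i := s)) u
      = prepend [u] (outcome own (profile_after \<sigma> (h @ [u])) u')"
    by (rule outcome_deviation) (auto simp: s_def)
  finally show ?thesis by (simp add: prepend_prepend)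
qed

section \<open>The labelling sequence\<close>

lemma antimono_stabilizes:
  fixes f :: "nat \<Rightarrow> 'b::wellorder"
  assumes "\<And>k. f (Suc k) \<le> f k"
  shows "\<exists>K. \<forall>k\<ge>K. f k = f K"
proof -
  obtain K where K: "f K = (LEAST x. x \<in> range f)"
    by (metis (mono_tags, lifting) LeastI_ex rangeE rangeI)
  have "f k = f K" if "K \<le> k" for k
  proof (rule antisym)
    show "f k \<le> f K" using lift_Suc_antimono_le[of f, OF assms] that by blast
    show "f K \<le> f k" unfolding K by (rule Least_le) simp
  qed
  then show ?thesis by blast
qed

lemma antimono_finite_support_stabilizes:
  fixes f :: "nat \<Rightarrow> 'a \<Rightarrow> 'b::wellorder"
  assumes "\<And>k x. f (Suc k) x \<le> f k x" and "finite D" and "\<And>k x. x \<notin> D \<Longrightarrow> f k x = f 0 x"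
  shows "\<exists>K. \<forall>k\<ge>K. f k = f K"
proof -
  obtain K where K: "\<And>x k. K x \<le> k \<Longrightarrow> f k x = f (K x) x"
    using antimono_stabilizes[of "\<lambda>k. f k _", OF assms(1)] by metis
  define M where "M = Max (insert 0 (K ` D))"
  have "f k x = f M x" if "M \<le> k" for k x
  proof (cases "x \<in> D")
    case True
    then have "K x \<le> M" using assms(2) by (simp add: M_def)
    then show ?thesis using K[of x k] K[of x M] that by simp
  qed (metis assms(3))
  then show ?thesis by blast
qed

definition update_value :: "'v set \<Rightarrow> ('v \<times> 'v) set \<Rightarrow> ('v \<Rightarrow> 'p) \<Rightarrow> 'p set \<Rightarrow> ('p \<Rightarrow> 'v set)
    \<Rightarrow> ('v \<times> 'p set \<Rightarrow> enat) \<Rightarrow> 'v \<times> 'p set \<Rightarrow> enat" where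
  "update_value V E own P F lam u = 1 + (INF u'\<in>{u'. (u, u') \<in> EdgesX V E P F}.
     SUP \<rho>\<in>Lam V E own P F lam u'. cost (FX V P (ownX own u)) \<rho>)"

lemma update_lab_eq:
  "update_lab V E own P F J N lam n u =
    (if u \<in> Vge V J N n then (if ownX own u \<in> snd u then 0 else update_value V E own P F lam u)
     else lam u)"
  by (simp add: update_lab_def update_value_def)

lemma Lam_mono:
  "(\<And>u. lam u \<le> lam' u) \<Longrightarrow> Lam V E own P F lam u \<subseteq> Lam V E own P F lam' u"
  unfolding Lam_def consistent_def using order_trans by blast

lemma update_value_mono:
  assumes "\<And>u. lam u \<le> lam' u"
  shows "update_value V E own P F lam u \<le> update_value V E own P F lam' u"
proof -
  have "Lam V E own P F lam u' \<subseteq> Lam V E own P F lam' u'" for u'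
    using assms by (rule Lam_mono)
  then show ?thesis
    unfolding update_value_def by (intro add_left_mono INF_mono' SUP_subset_mono order_refl)
qed

lemma cost_le_if_in_Lam:
  assumes "\<rho> \<in> Lam V E own P F lam u"
  shows "cost (FX V P (ownX own u)) \<rho> \<le> lam u"
proof -
  have "\<rho> 0 = u" and "cost (FX V P (ownX own (\<rho> 0))) (\<lambda>k. \<rho> (0 + k)) \<le> lam (\<rho> 0)"
    using assms unfolding Lam_def consistent_def by blast+
  then show ?thesis by simp
qed

lemma fst_lab_seq_Suc:
  "fst (lab_seq V E own P F J N (Suc k)) =
   update_lab V E own P F J N (fst (lab_seq V E own P F J N k)) (snd (lab_seq V E own P F J N k))"
  by (simp add: Let_def split: prod.split)

lemma snd_lab_seq_Suc_le: "snd (lab_seq V E own P F J N (Suc k)) \<le> snd (lab_seq V E own P F J N k)"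
  by (simp add: Let_def split: prod.split)

declare lab_seq.simps(2) [simp del]

lemma Vge_antimono: "n \<le> n' \<Longrightarrow> Vge V J N n' \<subseteq> Vge V J N n"
  unfolding Vge_def by force

lemma finite_Vge: "finite V \<Longrightarrow> finite (Vge V J N n)"
proof -
  assume "finite V"
  have "Vge V J N n \<subseteq> (\<lambda>(v, m). (v, J m)) ` (V \<times> {0..N})" unfolding Vge_def by force
  then show ?thesis using \<open>finite V\<close> finite_subset by blast
qed

lemma lab_seq_outside:
  "u \<notin> Vge V J N (snd (lab_seq V E own P F J N k)) \<Longrightarrow>
    fst (lab_seq V E own P F J N k) u = lambda0 own u"
proof (induction k)
  case (Suc k)
  then have "u \<notin> Vge V J N (snd (lab_seq V E own P F J N k))"
    using Vge_antimono[OF snd_lab_seq_Suc_le] by blast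
  then show ?case using Suc.IH by (simp add: fst_lab_seq_Suc update_lab_eq)
qed simp

lemma lab_seq_antimono:
  "fst (lab_seq V E own P F J N (Suc k)) u \<le> fst (lab_seq V E own P F J N k) u"
proof (induction k arbitrary: u)
  case 0
  show ?case by (simp add: fst_lab_seq_Suc update_lab_eq lambda0_def)
next
  case (Suc k)
  let ?l = "\<lambda>k. fst (lab_seq V E own P F J N k)"
  let ?n = "\<lambda>k. snd (lab_seq V E own P F J N k)"
  show ?case
  proof (cases "u \<in> Vge V J N (?n (Suc k)) \<and> ownX own u \<notin> snd u")
    case False
    then show ?thesis by (auto simp: fst_lab_seq_Suc[where k = "Suc k"] update_lab_eq)
  next
    case True
    then have not_done: "ownX own u \<notin> snd u"
      and updated: "?l (Suc (Suc k)) u = update_value V E own P F (?l (Suc k)) u"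
      by (simp_all add: fst_lab_seq_Suc[where k = "Suc k"] update_lab_eq)
    show ?thesis
    proof (cases "u \<in> Vge V J N (?n k)")
      case True
      then have "?l (Suc k) u = update_value V E own P F (?l k) u"
        using not_done by (simp add: fst_lab_seq_Suc[where k = k] update_lab_eq)
      then show ?thesis using updated update_value_mono[of "?l (Suc k)" "?l k"] Suc.IH by simp
    next
      case False
      \<comment> \<open>u only now enters the updated region, so its label is still \<open>lambda0 own u = \<infinity>\<close>.\<close>
      then have "?l (Suc k) u = lambda0 own u"
        by (simp add: lab_seq_outside fst_lab_seq_Suc[where k = k] update_lab_eq)
      then show ?thesis using not_done by (simp add: lambda0_def)
    qed
  qed
qed

lemma lambda_star_eq_lab_seq:
  assumes "finite V"
  shows "\<exists>K. lambda_star V E own P F J N = fst (lab_seq V E own P F J N K)"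
proof -
  have "fst (lab_seq V E own P F J N k) u = fst (lab_seq V E own P F J N 0) u"
    if "u \<notin> Vge V J N 0" for k u
    using that Vge_antimono[of 0] lab_seq_outside by (metis fst_conv lab_seq.simps(1) subsetD zero_le)
  then obtain K
    where K: "\<forall>k\<ge>K. fst (lab_seq V E own P F J N k) = fst (lab_seq V E own P F J N K)"
    using antimono_finite_support_stabilizes[of "\<lambda>k. fst (lab_seq V E own P F J N k)",
        OF lab_seq_antimono finite_Vge[OF assms]] by blast
  have "lambda_star V E own P F J N = fst (lab_seq V E own P F J N K)"
    unfolding lambda_star_def
    by (rule the_equality) (use K in \<open>blast, metis max.cobounded1 max.cobounded2\<close>)
  then show ?thesis by blast
qed

section \<open>Equilibrium plays in the extended game\<close>

lemma EdgesX_subset: "E \<subseteq> V \<times> V \<Longrightarrow> EdgesX V E P F \<subseteq> VX V P \<times> VX V P"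
  unfolding EdgesX_def VX_def by auto

lemma EdgesX_total:
  assumes "\<forall>v\<in>V. \<exists>v'. (v, v') \<in> E" and "u \<in> VX V P"
  shows "\<exists>u'. (u, u') \<in> EdgesX V E P F"
proof -
  obtain v' where "(fst u, v') \<in> E" using assms unfolding VX_def by auto
  then have "(u, (v', snd u \<union> {i \<in> P. v' \<in> F i})) \<in> EdgesX V E P F"
    using assms(2) unfolding EdgesX_def VX_def by auto
  then show ?thesis by blast
qed

lemma ownX_in: "\<forall>v\<in>V. own v \<in> P \<Longrightarrow> \<forall>u\<in>VX V P. ownX own u \<in> P"
  unfolding VX_def ownX_def by auto

lemma history_X_snd_mono:
  assumes "is_history (VX V P) (EdgesX V E P F) (h @ [u])" and "x \<in> set h"
  shows "snd x \<subseteq> snd u"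
proof -
  have "successively (\<lambda>x y. snd x \<subseteq> snd y) (h @ [u])"
    using assms(1) unfolding is_history_iff_successively
    by (auto elim!: successively_mono simp: EdgesX_def)
  then have "sorted_wrt (\<lambda>x y. snd x \<subseteq> snd y) (h @ [u])"
    by (subst (asm) successively_conv_sorted_wrt) (auto simp: transp_def)
  then show ?thesis using assms(2) by (simp add: sorted_wrt_append)
qed

lemma cost_FX_outcome_eq_0:
  "u \<in> VX V P \<Longrightarrow> i \<in> snd u \<Longrightarrow> cost (FX V P i) (outcome own \<tau> u) = 0"
  by (simp add: cost_eq_0 FX_def)

locale extended_game_SPE =
  fixes V :: "'v set" and E :: "('v \<times> 'v) set" and own :: "'v \<Rightarrow> 'p" and P :: "'p set"
    and F :: "'p \<Rightarrow> 'v set" and v0 :: 'v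
    and \<sigma> :: "'p \<Rightarrow> ('v \<times> 'p set) list \<Rightarrow> 'v \<times> 'p set"
  assumes owner: "\<forall>v\<in>V. own v \<in> P" and edges: "E \<subseteq> V \<times> V"
    and total: "\<forall>v\<in>V. \<exists>v'. (v, v') \<in> E"
    and spe: "is_SPE (VX V P) (EdgesX V E P F) (ownX own) P (FX V P) \<sigma> (x0X P F v0)"
begin

abbreviation "XV \<equiv> VX V P"
abbreviation "XE \<equiv> EdgesX V E P F"
abbreviation "x0 \<equiv> x0X P F v0"
abbreviation "play_after h u \<equiv> outcome (ownX own) (profile_after \<sigma> h) u"

lemma play_after_in_Lam_if_cost_le:
  assumes bound: "\<And>h u. is_history XV XE (h @ [u]) \<Longrightarrow> hd (h @ [u]) = x0 \<Longrightarrow>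
      cost (FX V P (ownX own u)) (play_after h u) \<le> lam u"
    and hist: "is_history XV XE (h @ [u])" "hd (h @ [u]) = x0"
  shows "play_after h u \<in> Lam V E own P F lam u"
  unfolding Lam_def consistent_def
proof (intro CollectI conjI allI)
  have strategies: "\<forall>i\<in>P. is_strategy XV XE (ownX own) i (\<sigma> i)"
    using spe by (simp add: is_SPE_def)
  note prefix = is_history_outcome_after_prefix[OF strategies ownX_in[OF owner]
      EdgesX_subset[OF edges] hist(1)]
  show "is_play XV XE (play_after h u)"
    by (rule is_play_outcome_after[OF strategies ownX_in[OF owner] EdgesX_subset[OF edges] hist(1)])
  show "play_after h u 0 = u" by simp
  fix n
  let ?pre = "map (play_after h u) [0..<n]"
  have "(\<lambda>k. play_after h u (n + k)) = play_after (h @ ?pre) (play_after h u n)"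
    by (rule ext) (simp add: outcome_shift[of _ _ u n])
  then show "cost (FX V P (ownX own (play_after h u n))) (\<lambda>k. play_after h u (n + k))
      \<le> lam (play_after h u n)"
    using bound[OF prefix(1)] prefix(2) hist(2) by simp
qed

lemma play_after_cost_le_update_lab:
  assumes consistent: "\<And>h u. is_history XV XE (h @ [u]) \<Longrightarrow> hd (h @ [u]) = x0 \<Longrightarrow>
      play_after h u \<in> Lam V E own P F lam u"
    and hist: "is_history XV XE (h @ [u])" "hd (h @ [u]) = x0"
  shows "cost (FX V P (ownX own u)) (play_after h u) \<le> update_lab V E own P F J N lam n u"
proof -
  let ?i = "ownX own u"
  have u: "u \<in> XV" using hist(1) by (simp add: is_history_def)
  consider "u \<notin> Vge V J N n" | "?i \<in> snd u" | "u \<in> Vge V J N n" "?i \<notin> snd u" by blast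
  then show ?thesis
  proof cases
    case 1
    then show ?thesis using cost_le_if_in_Lam[OF consistent[OF hist]] by (simp add: update_lab_eq)
  next
    case 2
    then show ?thesis using u by (simp add: cost_FX_outcome_eq_0)
  next
    case 3
    let ?g = "\<lambda>u'. SUP \<rho>\<in>Lam V E own P F lam u'. cost (FX V P ?i) \<rho>"
    obtain u' where u': "(u, u') \<in> XE" and "(INF u''\<in>{u''. (u, u'') \<in> XE}. ?g u'') = ?g u'"
      using wellorder_InfI[of _ "?g ` {u''. (u, u'') \<in> XE}"] EdgesX_total[OF total u] by blast
    then have update: "update_lab V E own P F J N lam n u = 1 + ?g u'"
      using 3 by (simp add: update_lab_eq update_value_def)
    have "u' \<in> XV" using u' EdgesX_subset[OF edges] by blast
    then have hist': "is_history XV XE ((h @ [u]) @ [u'])" "hd ((h @ [u]) @ [u']) = x0"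
      using is_history_snoc[OF hist(1)] u' hist(2) by (simp, cases h, auto)
    have "\<forall>x\<in>set (h @ [u]). x \<notin> FX V P ?i"
      using history_X_snd_mono[OF hist(1)] 3 by (auto simp: FX_def)
    moreover have "cost (FX V P ?i) (prepend h (play_after h u))
        \<le> cost (FX V P ?i) (prepend (h @ [u]) (play_after (h @ [u]) u'))"
      using SPE_deviation_cost[OF spe hist _ u'] ownX_in[OF owner] u by blast
    ultimately have "enat (length h) + cost (FX V P ?i) (play_after h u)
        \<le> enat (length h) + (1 + cost (FX V P ?i) (play_after (h @ [u]) u'))"
      by (simp add: cost_prepend eSuc_enat[symmetric] iadd_Suc iadd_Suc_right plus_1_eSuc)
    then have "cost (FX V P ?i) (play_after h u) \<le> 1 + cost (FX V P ?i) (play_after (h @ [u]) u')"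
      by simp
    also have "\<dots> \<le> 1 + ?g u'"
      using consistent[OF hist'] by (intro add_left_mono SUP_upper) auto
    finally show ?thesis using update by simp
  qed
qed

lemma play_after_in_Lam_lab_seq:
  "is_history XV XE (h @ [u]) \<Longrightarrow> hd (h @ [u]) = x0 \<Longrightarrow>
    play_after h u \<in> Lam V E own P F (fst (lab_seq V E own P F J N k)) u"
proof (induction k arbitrary: h u)
  case 0
  have "cost (FX V P (ownX own u')) (play_after h' u') \<le> lambda0 own u'"
    if "is_history XV XE (h' @ [u'])" for h' u'
    using that by (auto simp: lambda0_def cost_FX_outcome_eq_0 is_history_def)
  then show ?case using 0 by (intro play_after_in_Lam_if_cost_le) auto
next
  case (Suc k)
  then show ?case
    by (intro play_after_in_Lam_if_cost_le)
      (auto simp: fst_lab_seq_Suc intro!: play_after_cost_le_update_lab)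
qed

end

theorem proposition2p13:
  fixes V :: "'v set" and E :: "('v \<times> 'v) set" and own :: "'v \<Rightarrow> 'p" and P :: "'p set"
    and F :: "'p \<Rightarrow> 'v set" and v0 :: 'v and J :: "nat \<Rightarrow> 'p set"
    and \<sigma> :: "'p \<Rightarrow> ('v \<times> 'p set) list \<Rightarrow> 'v \<times> 'p set"
  assumes "finite V" and "finite P" and "card V \<ge> 2" and "card P \<le> card V"
    and "\<forall>v\<in>V. own v \<in> P"
    and "E \<subseteq> V \<times> V" and "\<forall>v\<in>V. \<exists>v'. (v, v') \<in> E"
    and "\<forall>i\<in>P. F i \<subseteq> V"
    and "v0 \<in> V"
    and "is_ext_order V E P F v0 J"
    and "is_SPE (VX V P) (EdgesX V E P F) (ownX own) P (FX V P) \<sigma> (x0X P F v0)"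
  shows "(\<forall>u. (x0X P F v0, u) \<in> (EdgesX V E P F)\<^sup>* \<longrightarrow>
            Lam_star V E own P F J (card (calI V E P F v0)) u \<noteq> {}) \<and>
         outcome (ownX own) \<sigma> (x0X P F v0)
           \<in> Lam_star V E own P F J (card (calI V E P F v0)) (x0X P F v0)"
proof -
  interpret extended_game_SPE V E own P F v0 \<sigma>
    using assms(5-7,11) by unfold_locales
  let ?N = "card (calI V E P F v0)"
  obtain K where "lambda_star V E own P F J ?N = fst (lab_seq V E own P F J ?N K)"
    using lambda_star_eq_lab_seq[OF assms(1)] by blast
  then have in_Lam_star: "play_after h u \<in> Lam_star V E own P F J ?N u"
    if "is_history XV XE (h @ [u])" "hd (h @ [u]) = x0" for h u
    unfolding Lam_star_def using play_after_in_Lam_lab_seq[OF that] by simp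
  have x0: "x0X P F v0 \<in> VX V P" using assms(9) by (simp add: x0X_def VX_def)
  have "Lam_star V E own P F J ?N u \<noteq> {}" if "(x0X P F v0, u) \<in> (EdgesX V E P F)\<^sup>*" for u
    using rtrancl_imp_history[OF that x0 EdgesX_subset[OF assms(6)]] in_Lam_star by blast
  moreover have "outcome (ownX own) \<sigma> (x0X P F v0) \<in> Lam_star V E own P F J ?N (x0X P F v0)"
    using in_Lam_star[of "[]"] x0 by (simp add: is_history_def)
  ultimately show ?thesis by blast
qed

end
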